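(* Let $S$ be a fixed finite set with $N$ elements and let $V\to\infty$. For each $V$ let $n^V:S\to\mathbb Z^{N_2}_{\ge0}$ be injective and $\mathbf n^{x,V}\in\mathbb Z^{N_1}_{\ge0}$, and assume: (a) for all $y,y'\in S$ and $\ell$, whether $n^V(y')-n^V(y)=\Xi^Y_\ell$ (resp. $=-\Xi^Y_\ell$) does not depend on $V$ (this defines a fixed set of edges $y\to y'$ labelled $(\ell,+)$ resp. $(\ell,-)$); (b) $n^V(y)/(VN_A)\to\beta(y)\in[0,\infty)^{N_2}$ for each $y\in S$ and $\mathbf n^{x,V}/(VN_A)\to\alpha\in[0,\infty)^{N_1}$; (c) for each $V$ the generator $Q^V=(q^V_{yy'})$ on $S$, defined by $q^V_{yy'}=r_{\pm\ell}(\mathbf n^{x,V},n^V(y);V)$ if $y\to y'$ is an edge labelled $(\ell,\pm)$, $q^V_{yy'}=0$ for other $y'\neq y$, and $q^V_{yy}=-\sum_{y'\ne y}q^V_{yy'}$, is irreducible. Define the limiting generator $\hat Q$ on $S$ by $\hat q_{yy'}=a_{\pm\ell}(\alpha,\beta(y))$ if $y\to y'$ is an edge labelled $(\ell,\pm)$, $\hat q_{yy'}=0$ for other $y'\ne y$, $\hat q_{yy}=-\sum_{y'\ne y}\hat q_{yy'}$, and assume $\sum_{j\in S}|\hat Q(\{j\}^c)|\neq 0$. Then for every $\tilde c\in\mathbb Z^M$ the limit $\mathcal J_{\tilde c}=\lim_{V\to\infty}\omega^V_{\tilde c}/V$ exists and $$ \mathcal J_{\tilde c}=\sum_{\substack{c=[y_1,\dots,y_s]\\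 \phi(c)=\tilde c}}(-1)^{s-1}\,N_A^s\prod_{\ell=1}^Mk_{+\ell}^{c^+_\ell}k_{-\ell}^{c^-_\ell}\prod_{i=1}^{N_1}\alpha_i^{\,c^+_\ell\Xi^{i,X}_{+\ell}+c^-_\ell\Xi^{i,X}_{-\ell}}\prod_{h=1}^s\prod_{j=1}^{N_2}\beta_j(y_h)^{\Xi^{j,Y}_{\sigma_h\ell_h}}\cdot\frac{|\hat Q(\{y_1,\dots,y_s\}^c)|}{\sum_{j\in S}|\hat Q(\{j\}^c)|}, $$ the sum running over all directed cycles $c$ in $S$ (each counted once up to rotation) with $\phi(c)=\tilde c$; here $(\ell_h,\sigma_h)$ is the label of the edge $y_h\to y_{h+1}$ and $c^\pm_\ell$ are as defined in the context. Equivalently, each term is $(-1)^{s-1}\hat q_{y_1y_2}\cdots\hat q_{y_sy_1}\,|\hat Q(\{y_1,\dots,y_s\}^c)|/\sum_{j}|\hat Q(\{j\}^c)|$, which equals $\lim_{V\to\infty}\omega^V_c/V$.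
   Context: Chemical reaction network model. There are external species $X_1,\dots,X_{N_1}$ and internal species $Y_1,\dots,Y_{N_2}$, and $M$ reversible reactions $R_1,\dots,R_M$: $R_1:\ \sum_j \Xi_{+1}^{j,Y}Y_j+\sum_i\Xi_{+1}^{i,X}X_i\rightleftharpoons\sum_j\Xi_{-1}^{j,Y}Y_j$; $R_\ell:\ \sum_j\Xi_{+\ell}^{j,Y}Y_j\rightleftharpoons\sum_j\Xi_{-\ell}^{j,Y}Y_j$ for $2\le\ell\le M-1$; $R_M:\ \sum_j\Xi_{+M}^{j,Y}Y_j\rightleftharpoons\sum_i\Xi_{-M}^{i,X}X_i+\sum_j\Xi_{-M}^{j,Y}Y_j$. All $\Xi^{j,Y}_{\pm\ell},\Xi^{i,X}_{\pm\ell}$ are nonnegative integers, with the convention $\Xi^{i,X}_{\pm\ell}=0$ except for $\Xi^{i,X}_{+1}$ and $\Xi^{i,X}_{-M}$. Here $\Xi^{\cdot}_{+\ell}$ are reactant coefficients of the forward reaction $R_{+\ell}$ and $\Xi^{\cdot}_{-\ell}$ are reactant coefficients of the backward reaction $R_{-\ell}$. Let $n_{\sigma\ell}=\sum_i\Xi_{\sigma\ell}^{i,X}+\sum_j\Xi_{\sigma\ell}^{j,Y}$, $V>0$ the volume, $N_A$ Avogadro's number, and $k_{\pm\ell}>0$ rate constants. Writing $(n)_m=n(n-1)\cdots(n-m+1)$, the propensity of $R_{\sigma\ell}$ is $$r_{\sigma\ell}(\mathbf n^x,\mathbf n^y;V)=k_{\sigma\ell}\,(VN_A)^{1-n_{\sigma\ell}}\prod_{i=1}^{N_1}(n^x_i)_{\Xi^{i,X}_{\sigma\ell}}\prod_{j=1}^{N_2}(n^y_j)_{\Xi^{j,Y}_{\sigma\ell}},$$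 and $a_{\sigma\ell}(\alpha,\beta)=N_Ak_{\sigma\ell}\prod_i\alpha_i^{\Xi^{i,X}_{\sigma\ell}}\prod_j\beta_j^{\Xi^{j,Y}_{\sigma\ell}}$. The stoichiometric column of reaction $\ell$ for $Y$ is $\Xi^Y_\ell\in\mathbb Z^{N_2}$ with entries $\Xi^{j,Y}_{-\ell}-\Xi^{j,Y}_{+\ell}$. Assume the $2M$ vectors $\pm\Xi^Y_1,\dots,\pm\Xi^Y_M$ are nonzero and pairwise distinct, so every transition of the chain corresponds to a unique reaction and direction. Cycles and cycle fluxes. A directed cycle $c=[y_1,\dots,y_s]$, $s\ge2$, consists of distinct states with $q_{y_hy_{h+1}}>0$ for all $h$ ($y_{s+1}=y_1$); rotations $[y_i,\dots,y_{i+s-1}]$ (indices mod $s$) are identified. For a finite irreducible generator $Q$ on $S$ and $H\subseteq S$, $|Q(H)|$ denotes the determinant of the submatrix of $Q$ with rows and columns indexed by $H$ ($|Q(\emptyset)|=1$), and $H^c=S\setminus H$. The cycle flux of $c$ (the almost-sure long-run rate at which the chain's trajectory completes the cycle $c$) is $$\omega_c=(-1)^{s-1}q_{y_1y_2}q_{y_2y_3}\cdots q_{y_sy_1}\frac{|Q(\{y_1,\dots,y_s\}^c)|}{\sum_{j\in S}|Q(\{j\}^c)|}.$$ For a cycle $c$, let $c^+_\ell$ (resp. $c^-_\ell$) be the number of steps $y_h\to y_{h+1}$ that are the forward (resp. backward) reaction $\ell$, i.e. $y_{h+1}=y_h+\Xi^Y_\ell$ (resp. $y_{h+1}=y_h-\Xi^Y_\ell$),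 and $\phi(c)=\tilde c=(c_1,\dots,c_M)$ with $c_\ell=c^+_\ell-c^-_\ell$ (net number of occurrences of reaction $\ell$ in $c$). The mesoscopic reaction-cycle flux of $\tilde c\in\mathbb Z^M$ is $\omega_{\tilde c}=\sum_{c:\ \phi(c)=\tilde c}\omega_c$; $\omega^V_c,\omega^V_{\tilde c}$ denote these quantities computed with the generator $Q^V$. *)

theory Defs
  imports "HOL-Analysis.Analysis"
begin

text \<open>Reaction directions are encoded by a boolean: True = forward (+), False = backward (-).
  Reactions are indexed by l in {1..M}; external species by i < N1; internal species by j < N2.
  XiX s l i and XiY s l j are the reactant coefficients of reaction R_{s l}; k s l its rate constant.\<close>

definition ffact_r :: "nat \<Rightarrow> nat \<Rightarrow> real" where
  "ffact_r n m = (\<Prod>t<m. real n - real t)"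

text \<open>Y-stoichiometric column of reaction l, with sign s: s=True gives Xi^Y_l, s=False gives -Xi^Y_l.\<close>
definition stoichY :: "(bool \<Rightarrow> nat \<Rightarrow> nat \<Rightarrow> nat) \<Rightarrow> bool \<Rightarrow> nat \<Rightarrow> nat \<Rightarrow> int" where
  "stoichY XiY s l j = (if s then 1 else -1) * (int (XiY False l j) - int (XiY True l j))"

definition molec :: "nat \<Rightarrow> nat \<Rightarrow> (bool \<Rightarrow> nat \<Rightarrow> nat \<Rightarrow> nat) \<Rightarrow> (bool \<Rightarrow> nat \<Rightarrow> nat \<Rightarrow> nat)
    \<Rightarrow> bool \<Rightarrow> nat \<Rightarrow> nat" where
  "molec N1 N2 XiX XiY s l = (\<Sum>i<N1. XiX s l i) + (\<Sum>j<N2. XiY s l j)"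

definition propensity :: "nat \<Rightarrow> nat \<Rightarrow> (bool \<Rightarrow> nat \<Rightarrow> nat \<Rightarrow> nat) \<Rightarrow> (bool \<Rightarrow> nat \<Rightarrow> nat \<Rightarrow> nat)
    \<Rightarrow> (bool \<Rightarrow> nat \<Rightarrow> real) \<Rightarrow> real \<Rightarrow> bool \<Rightarrow> nat \<Rightarrow> (nat \<Rightarrow> nat) \<Rightarrow> (nat \<Rightarrow> nat) \<Rightarrow> real \<Rightarrow> real" where
  "propensity N1 N2 XiX XiY k NA s l nx ny V =
     k s l * (V * NA) powi (1 - int (molec N1 N2 XiX XiY s l))
       * (\<Prod>i<N1. ffact_r (nx i) (XiX s l i)) * (\<Prod>j<N2. ffact_r (ny j) (XiY s l j))"

definition macro_rate :: "nat \<Rightarrow> nat \<Rightarrow> (bool \<Rightarrow> nat \<Rightarrow> nat \<Rightarrow> nat) \<Rightarrow> (bool \<Rightarrow> nat \<Rightarrow> nat \<Rightarrow> nat)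
    \<Rightarrow> (bool \<Rightarrow> nat \<Rightarrow> real) \<Rightarrow> real \<Rightarrow> bool \<Rightarrow> nat \<Rightarrow> (nat \<Rightarrow> real) \<Rightarrow> (nat \<Rightarrow> real) \<Rightarrow> real" where
  "macro_rate N1 N2 XiX XiY k NA s l \<alpha> \<beta> =
     NA * k s l * (\<Prod>i<N1. \<alpha> i ^ XiX s l i) * (\<Prod>j<N2. \<beta> j ^ XiY s l j)"

definition gen_of :: "('s::finite \<Rightarrow> 's \<Rightarrow> real) \<Rightarrow> 's \<Rightarrow> 's \<Rightarrow> real" where
  "gen_of rate y y' = (if y = y' then - (\<Sum>z\<in>UNIV - {y}. rate y z) else rate y y')"

definition irreducible_gen :: "('s::finite \<Rightarrow> 's \<Rightarrow> real) \<Rightarrow> bool" where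
  "irreducible_gen Q \<longleftrightarrow> (\<forall>y y'. (y, y') \<in> {(a, b). a \<noteq> b \<and> Q a b > 0}\<^sup>*)"

text \<open>|Q(H)|: determinant of the principal submatrix with rows/columns in H (Leibniz formula);
  equals 1 for H empty.\<close>
definition det_sub :: "('s::finite \<Rightarrow> 's \<Rightarrow> real) \<Rightarrow> 's set \<Rightarrow> real" where
  "det_sub Q H = (\<Sum>p\<in>{p. p permutes H}. of_int (sign p) * (\<Prod>i\<in>H. Q i (p i)))"

definition dcycles :: "('s \<Rightarrow> 's \<Rightarrow> bool) \<Rightarrow> 's list set" where
  "dcycles R = {ys. 2 \<le> length ys \<and> distinct ys \<and>
      (\<forall>h<length ys. R (ys ! h) (ys ! ((h + 1) mod length ys)))}"

definition cycle_classes :: "('s \<Rightarrow> 's \<Rightarrow> bool) \<Rightarrow> 's list set set" where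
  "cycle_classes R = (\<lambda>ys. {rotate m ys | m. True}) ` dcycles R"

definition rep :: "'s list set \<Rightarrow> 's list" where
  "rep c = (SOME ys. ys \<in> c)"

definition cycle_flux :: "('s::finite \<Rightarrow> 's \<Rightarrow> real) \<Rightarrow> 's list \<Rightarrow> real" where
  "cycle_flux Q ys =
     (-1) ^ (length ys - 1) * (\<Prod>h<length ys. Q (ys ! h) (ys ! ((h + 1) mod length ys)))
     * det_sub Q (UNIV - set ys) / (\<Sum>j\<in>UNIV. det_sub Q (UNIV - {j}))"

definition step_count :: "('s \<Rightarrow> 's \<Rightarrow> nat \<Rightarrow> bool \<Rightarrow> bool) \<Rightarrow> 's list \<Rightarrow> nat \<Rightarrow> bool \<Rightarrow> nat" where
  "step_count L ys l s = card {h. h < length ys \<and> L (ys ! h) (ys ! ((h + 1) mod length ys)) l s}"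

definition phi :: "('s \<Rightarrow> 's \<Rightarrow> nat \<Rightarrow> bool \<Rightarrow> bool) \<Rightarrow> 's list \<Rightarrow> nat \<Rightarrow> int" where
  "phi L ys l = int (step_count L ys l True) - int (step_count L ys l False)"

definition rc_flux :: "nat \<Rightarrow> ('s::finite \<Rightarrow> 's \<Rightarrow> real) \<Rightarrow> ('s \<Rightarrow> 's \<Rightarrow> nat \<Rightarrow> bool \<Rightarrow> bool)
    \<Rightarrow> (nat \<Rightarrow> int) \<Rightarrow> real" where
  "rc_flux M Q L ct = (\<Sum>c\<in>{c\<in>cycle_classes (\<lambda>y y'. Q y y' > 0). \<forall>l\<in>{1..M}. phi L (rep c) l = ct l}.
       cycle_flux Q (rep c))"

definition edge_label :: "nat \<Rightarrow> ('s \<Rightarrow> 's \<Rightarrow> nat \<Rightarrow> bool \<Rightarrow> bool) \<Rightarrow> 's \<Rightarrow> 's \<Rightarrow> nat \<times> bool" where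
  "edge_label M E y y' = (THE p. fst p \<in> {1..M} \<and> E y y' (fst p) (snd p))"

definition labV :: "nat \<Rightarrow> (bool \<Rightarrow> nat \<Rightarrow> nat \<Rightarrow> nat) \<Rightarrow> (real \<Rightarrow> 's \<Rightarrow> nat \<Rightarrow> nat)
    \<Rightarrow> real \<Rightarrow> 's \<Rightarrow> 's \<Rightarrow> nat \<Rightarrow> bool \<Rightarrow> bool" where
  "labV N2 XiY n V y y' l s \<longleftrightarrow> (\<forall>j<N2. int (n V y' j) - int (n V y j) = stoichY XiY s l j)"

definition genV :: "nat \<Rightarrow> nat \<Rightarrow> nat \<Rightarrow> (bool \<Rightarrow> nat \<Rightarrow> nat \<Rightarrow> nat) \<Rightarrow> (bool \<Rightarrow> nat \<Rightarrow> nat \<Rightarrow> nat)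
    \<Rightarrow> (bool \<Rightarrow> nat \<Rightarrow> real) \<Rightarrow> real \<Rightarrow> (real \<Rightarrow> 's::finite \<Rightarrow> nat \<Rightarrow> nat) \<Rightarrow> (real \<Rightarrow> nat \<Rightarrow> nat)
    \<Rightarrow> real \<Rightarrow> 's \<Rightarrow> 's \<Rightarrow> real" where
  "genV N1 N2 M XiX XiY k NA n nx V = gen_of (\<lambda>y y'. \<Sum>l\<in>{1..M}. \<Sum>s\<in>UNIV.
      if labV N2 XiY n V y y' l s then propensity N1 N2 XiX XiY k NA s l (nx V) (n V y) V else 0)"

definition genHat :: "nat \<Rightarrow> nat \<Rightarrow> nat \<Rightarrow> (bool \<Rightarrow> nat \<Rightarrow> nat \<Rightarrow> nat) \<Rightarrow> (bool \<Rightarrow> nat \<Rightarrow> nat \<Rightarrow> nat)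
    \<Rightarrow> (bool \<Rightarrow> nat \<Rightarrow> real) \<Rightarrow> real \<Rightarrow> ('s::finite \<Rightarrow> 's \<Rightarrow> nat \<Rightarrow> bool \<Rightarrow> bool)
    \<Rightarrow> (nat \<Rightarrow> real) \<Rightarrow> ('s \<Rightarrow> nat \<Rightarrow> real) \<Rightarrow> 's \<Rightarrow> 's \<Rightarrow> real" where
  "genHat N1 N2 M XiX XiY k NA E \<alpha> \<beta> = gen_of (\<lambda>y y'. \<Sum>l\<in>{1..M}. \<Sum>s\<in>UNIV.
      if E y y' l s then macro_rate N1 N2 XiX XiY k NA s l \<alpha> (\<beta> y) else 0)"

definition cycle_term :: "nat \<Rightarrow> nat \<Rightarrow> nat \<Rightarrow> (bool \<Rightarrow> nat \<Rightarrow> nat \<Rightarrow> nat) \<Rightarrow> (bool \<Rightarrow> nat \<Rightarrow> nat \<Rightarrow> nat)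
    \<Rightarrow> (bool \<Rightarrow> nat \<Rightarrow> real) \<Rightarrow> real \<Rightarrow> ('s::finite \<Rightarrow> 's \<Rightarrow> nat \<Rightarrow> bool \<Rightarrow> bool)
    \<Rightarrow> (nat \<Rightarrow> real) \<Rightarrow> ('s \<Rightarrow> nat \<Rightarrow> real) \<Rightarrow> 's list \<Rightarrow> real" where
  "cycle_term N1 N2 M XiX XiY k NA E \<alpha> \<beta> ys =
     (let Qhat = genHat N1 N2 M XiX XiY k NA E \<alpha> \<beta>; s = length ys in
      (-1) ^ (s - 1) * NA ^ s
      * (\<Prod>l\<in>{1..M}. k True l ^ step_count E ys l True * k False l ^ step_count E ys l False
           * (\<Prod>i<N1. \<alpha> i ^ (step_count E ys l True * XiX True l i
                               + step_count E ys l False * XiX False l i)))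
      * (\<Prod>h<s. \<Prod>j<N2. \<beta> (ys ! h) j
           ^ XiY (snd (edge_label M E (ys ! h) (ys ! ((h + 1) mod s))))
                 (fst (edge_label M E (ys ! h) (ys ! ((h + 1) mod s)))) j)
      * det_sub Qhat (UNIV - set ys) / (\<Sum>j\<in>UNIV. det_sub Qhat (UNIV - {j})))"

end

theory Submission
  imports Defs
begin

text \<open>Every rate of \<open>Q\<^sup>V\<close> is \<open>V\<close> times a quantity converging to the
  corresponding rate of the limiting generator: the falling factorials satisfy \<open>(n)\<^sub>m / (V N\<^sub>A)\<^sup>m \<rightarrow> \<beta>\<^sup>m\<close>
  when \<open>n / (V N\<^sub>A) \<rightarrow> \<beta>\<close>. In the cycle flux the numerator is a polynomial of degree
  \<open>s + (|S| - s)\<close> and the denominator one of degree \<open>|S| - 1\<close> in the rates, so \<open>\<omega>\<^sub>c\<close> is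
  homogeneous of degree one; hence \<open>\<omega>\<^sup>V\<^sub>c / V\<close> is the cycle flux of the rescaled generator,
  which converges by continuity because the limiting denominator is nonzero. Cycles of
  \<open>Q\<^sup>V\<close> are cycles of the fixed edge graph, and an edge cycle that is not a cycle of
  \<open>Q\<^sup>V\<close> has a vanishing rate and thus zero flux, so the reaction-cycle flux is a fixed
  finite sum of such cycle fluxes.\<close>

lemma tendsto_const_divide_volume:
  assumes "NA > (0::real)"
  shows "((\<lambda>V. c / (V * NA)) \<longlongrightarrow> 0) at_top"
proof -
  have "filterlim (\<lambda>V::real. NA * V) at_top at_top"
    by (rule filterlim_tendsto_pos_mult_at_top[OF tendsto_const assms filterlim_ident])
  then have "filterlim (\<lambda>V::real. V * NA) at_top at_top" by (simp add: mult.commute)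
  then show ?thesis
    by (intro tendsto_divide_0[OF tendsto_const] filterlim_at_top_imp_at_infinity)
qed

lemma ffact_r_scaled_tendsto:
  assumes f: "((\<lambda>V. real (f V) / (V * NA)) \<longlongrightarrow> b) at_top" and NA: "NA > 0"
  shows "((\<lambda>V. ffact_r (f V) m / (V * NA) ^ m) \<longlongrightarrow> b ^ m) at_top"
proof -
  have "((\<lambda>V. \<Prod>t<m. real (f V) / (V * NA) - real t / (V * NA)) \<longlongrightarrow> (\<Prod>t<m. b - 0)) at_top"
    by (intro tendsto_prod tendsto_diff f tendsto_const_divide_volume NA)
  moreover have "(\<Prod>t<m. real (f V) / (V * NA) - real t / (V * NA)) = ffact_r (f V) m / (V * NA) ^ m"
    for V
    by (simp add: ffact_r_def prod_dividef flip: diff_divide_distrib)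
  ultimately show ?thesis by simp
qed

lemma ffact_r_nonneg: "ffact_r n m \<ge> 0"
proof (cases "n < m")
  case True
  then have "(\<Prod>t<m. real n - real t) = 0" by (intro prod_zero) auto
  then show ?thesis unfolding ffact_r_def by linarith
next
  case False
  then show ?thesis unfolding ffact_r_def by (intro prod_nonneg) auto
qed

lemma propensity_nonneg:
  assumes "k s l > 0" "V > 0" "NA > 0"
  shows "propensity N1 N2 XiX XiY k NA s l nx ny V \<ge> 0"
  unfolding propensity_def using assms
  by (intro mult_nonneg_nonneg prod_nonneg ffact_r_nonneg) auto

lemma propensity_div_volume:
  assumes "V > 0" "NA > (0::real)"
  shows "propensity N1 N2 XiX XiY k NA s l nx ny V / V =
     NA * k s l * (\<Prod>i<N1. ffact_r (nx i) (XiX s l i) / (V * NA) ^ XiX s l i)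
       * (\<Prod>j<N2. ffact_r (ny j) (XiY s l j) / (V * NA) ^ XiY s l j)"
proof -
  define w where "w = V * NA"
  have w: "w > 0" using assms by (simp add: w_def)
  have powi: "w powi (1 - int (a + b)) = w / (w ^ a * w ^ b)" for a b
    using w by (simp add: power_int_diff power_add del: of_nat_add)
  have "propensity N1 N2 XiX XiY k NA s l nx ny V / V =
     k s l * (w / ((\<Prod>i<N1. w ^ XiX s l i) * (\<Prod>j<N2. w ^ XiY s l j)))
       * (\<Prod>i<N1. ffact_r (nx i) (XiX s l i)) * (\<Prod>j<N2. ffact_r (ny j) (XiY s l j)) / V"
    unfolding propensity_def molec_def w_def[symmetric] powi by (simp add: power_sum)
  also have "\<dots> = NA * k s l * ((\<Prod>i<N1. ffact_r (nx i) (XiX s l i)) / (\<Prod>i<N1. w ^ XiX s l i))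
       * ((\<Prod>j<N2. ffact_r (ny j) (XiY s l j)) / (\<Prod>j<N2. w ^ XiY s l j))"
    using assms w by (simp add: w_def field_simps)
  finally show ?thesis by (simp add: prod_dividef w_def)
qed

lemma propensity_div_volume_tendsto:
  assumes NA: "NA > (0::real)"
    and lim_x: "\<And>i. i < N1 \<Longrightarrow> ((\<lambda>V. real (nx V i) / (V * NA)) \<longlongrightarrow> \<alpha> i) at_top"
    and lim_y: "\<And>j. j < N2 \<Longrightarrow> ((\<lambda>V. real (ny V j) / (V * NA)) \<longlongrightarrow> b j) at_top"
  shows "((\<lambda>V. propensity N1 N2 XiX XiY k NA s l (nx V) (ny V) V / V)
           \<longlongrightarrow> macro_rate N1 N2 XiX XiY k NA s l \<alpha> b) at_top"
proof -
  have "((\<lambda>V. NA * k s l * (\<Prod>i<N1. ffact_r (nx V i) (XiX s l i) / (V * NA) ^ XiX s l i)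
       * (\<Prod>j<N2. ffact_r (ny V j) (XiY s l j) / (V * NA) ^ XiY s l j))
     \<longlongrightarrow> macro_rate N1 N2 XiX XiY k NA s l \<alpha> b) at_top"
    unfolding macro_rate_def
    by (intro tendsto_mult tendsto_const tendsto_prod ffact_r_scaled_tendsto lim_x lim_y NA) auto
  moreover have "\<forall>\<^sub>F V in at_top. NA * k s l * (\<Prod>i<N1. ffact_r (nx V i) (XiX s l i) / (V * NA) ^ XiX s l i)
       * (\<Prod>j<N2. ffact_r (ny V j) (XiY s l j) / (V * NA) ^ XiY s l j)
      = propensity N1 N2 XiX XiY k NA s l (nx V) (ny V) V / V"
    using eventually_gt_at_top[of 0] by eventually_elim (simp add: propensity_div_volume NA)
  ultimately show ?thesis by (rule Lim_transform_eventually)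
qed

lemma gen_of_tendsto:
  assumes "\<And>y y'. ((\<lambda>V. r V y y') \<longlongrightarrow> R y y') F"
  shows "((\<lambda>V. gen_of (r V) i j) \<longlongrightarrow> gen_of R i j) F"
  unfolding gen_of_def by (cases "i = j") (simp_all add: assms tendsto_sum tendsto_minus)

lemma gen_of_scale: "gen_of (\<lambda>y y'. c * r y y') = (\<lambda>i j. c * gen_of r i j)"
  unfolding gen_of_def by (intro ext) (simp add: sum_distrib_left)

lemma det_sub_scale:
  fixes Q :: "'s::finite \<Rightarrow> 's \<Rightarrow> real"
  shows "det_sub (\<lambda>i j. c * Q i j) H = c ^ card H * det_sub Q H"
  unfolding det_sub_def by (simp add: prod.distrib sum_distrib_left mult_ac)

lemma det_sub_tendsto:
  assumes "\<And>i j. ((\<lambda>V. P V i j) \<longlongrightarrow> Q i j) F"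
  shows "((\<lambda>V. det_sub (P V) H) \<longlongrightarrow> det_sub Q H) F"
  unfolding det_sub_def by (intro tendsto_sum tendsto_mult tendsto_const tendsto_prod assms)

lemma cycle_flux_scale:
  fixes Q :: "'s::finite \<Rightarrow> 's \<Rightarrow> real"
  assumes c: "c \<noteq> 0" and d: "distinct ys"
  shows "cycle_flux (\<lambda>i j. c * Q i j) ys = c * cycle_flux Q ys"
proof -
  let ?N = "CARD('s)" and ?L = "length ys"
  define P where "P = (-1) ^ (?L - 1) * (\<Prod>h<?L. Q (ys ! h) (ys ! ((h + 1) mod ?L)))"
  define D where "D = det_sub Q (UNIV - set ys)"
  define S where "S = (\<Sum>j\<in>UNIV. det_sub Q (UNIV - {j}))"
  have "?L \<le> ?N"
    using d by (metis card_mono distinct_card finite_class.finite_UNIV subset_UNIV)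
  then have pw: "c ^ ?L * c ^ (?N - ?L) = c * c ^ (?N - 1)"
    by (metis Suc_diff_1 finite_UNIV_card_ge_0 finite le_add_diff_inverse power_Suc power_add)
  have "card (UNIV - set ys) = ?N - ?L"
    using d by (simp add: card_Diff_subset distinct_card)
  moreover have "card (UNIV - {j}) = ?N - 1" for j :: 's
    by (simp add: card_Diff_subset)
  ultimately have "cycle_flux (\<lambda>i j. c * Q i j) ys = (c ^ ?L * c ^ (?N - ?L)) * (P * D) / (c ^ (?N - 1) * S)"
    unfolding cycle_flux_def det_sub_scale P_def D_def S_def
    by (simp add: prod.distrib mult_ac sum_distrib_left)
  also have "\<dots> = c * (P * D / S)"
    unfolding pw using c by simp
  finally show ?thesis unfolding cycle_flux_def P_def D_def S_def by (simp add: mult_ac)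
qed

lemma cycle_flux_tendsto:
  fixes Q :: "'s::finite \<Rightarrow> 's \<Rightarrow> real"
  assumes "\<And>i j. ((\<lambda>V. P V i j) \<longlongrightarrow> Q i j) F"
    and "(\<Sum>j\<in>UNIV. det_sub Q (UNIV - {j})) \<noteq> 0"
  shows "((\<lambda>V. cycle_flux (P V) ys) \<longlongrightarrow> cycle_flux Q ys) F"
  unfolding cycle_flux_def
  by (intro tendsto_divide tendsto_sum tendsto_mult tendsto_const tendsto_prod assms det_sub_tendsto)

lemma dcycles_step_neq:
  assumes "ys \<in> dcycles R" "h < length ys"
  shows "ys ! h \<noteq> ys ! ((h + 1) mod length ys)"
proof -
  let ?L = "length ys"
  have L2: "?L \<ge> 2" and dist: "distinct ys" using assms(1) unfolding dcycles_def by auto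
  have "(h + 1) mod ?L \<noteq> h"
  proof (cases "h + 1 < ?L")
    case False
    then have "h + 1 = ?L" using assms(2) by simp
    then show ?thesis using L2 by auto
  qed simp
  moreover have "(h + 1) mod ?L < ?L" using L2 by (intro mod_less_divisor) linarith
  ultimately show ?thesis using nth_eq_iff_index_eq[OF dist] assms(2) by simp
qed

lemma dcycles_mono:
  assumes "ys \<in> dcycles R" "\<And>y y'. y \<noteq> y' \<Longrightarrow> R y y' \<Longrightarrow> R' y y'"
  shows "ys \<in> dcycles R'"
  using assms dcycles_step_neq[OF assms(1)] unfolding dcycles_def by auto

lemma dcycles_rotate:
  assumes "ys \<in> dcycles R"
  shows "rotate m ys \<in> dcycles R"
proof -
  let ?L = "length ys"
  have L: "?L \<ge> 2" "distinct ys" and e: "\<And>h. h < ?L \<Longrightarrow> R (ys ! h) (ys ! ((h + 1) mod ?L))"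
    using assms unfolding dcycles_def by auto
  have "R (rotate m ys ! h) (rotate m ys ! ((h + 1) mod ?L))" if h: "h < ?L" for h
  proof -
    have "(h + 1) mod ?L < ?L" "(h + m) mod ?L < ?L"
      using L(1) by (intro mod_less_divisor, linarith)+
    moreover have "((h + 1) mod ?L + m) mod ?L = ((h + m) mod ?L + 1) mod ?L"
      by (simp add: mod_simps add_ac)
    ultimately show ?thesis
      using e nth_rotate[OF h, of m] nth_rotate[of "(h + 1) mod ?L" ys m] by (simp add: add.commute)
  qed
  then show ?thesis using L unfolding dcycles_def by (simp add: distinct_rotate)
qed

lemma rotations_rotate: "{rotate m (rotate a ys) | m. True} = {rotate m ys | m. True}"
proof (intro equalityI subsetI)
  fix x assume "x \<in> {rotate m (rotate a ys) | m. True}"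
  then show "x \<in> {rotate m ys | m. True}" by (auto simp: rotate_rotate)
next
  fix x assume "x \<in> {rotate m ys | m. True}"
  then obtain m where x: "x = rotate m ys" by auto
  let ?L = "length ys"
  \<comment> \<open>rotating back by the complement of \<open>a mod L\<close> undoes the rotation by \<open>a\<close>\<close>
  have "rotate (m + (?L - a mod ?L)) (rotate a ys) = rotate m ys"
  proof (cases "?L = 0")
    case False
    have "m + (?L - a mod ?L) + a = m + (?L - a mod ?L + a mod ?L) + (a div ?L) * ?L"
      by (metis add.assoc add.commute div_mult_mod_eq)
    also have "?L - a mod ?L + a mod ?L = ?L" using False by simp
    finally have "m + (?L - a mod ?L) + a = m + ?L + (a div ?L) * ?L" by simp
    then have "(m + (?L - a mod ?L) + a) mod ?L = m mod ?L" by (simp only:) simp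
    then show ?thesis by (metis rotate_rotate rotate_conv_mod)
  qed simp
  then have "x = rotate (m + (?L - a mod ?L)) (rotate a ys)" using x by simp
  then show "x \<in> {rotate m (rotate a ys) | m. True}" by blast
qed

lemma finite_dcycles: "finite (dcycles (R :: 's::finite \<Rightarrow> 's \<Rightarrow> bool))"
proof -
  have "dcycles R \<subseteq> {xs. set xs \<subseteq> UNIV \<and> length xs \<le> CARD('s)}"
    unfolding dcycles_def
    by (auto, metis card_mono distinct_card finite_class.finite_UNIV subset_UNIV)
  then show ?thesis by (rule finite_subset) (rule finite_lists_length_le, simp)
qed

lemma finite_cycle_classes: "finite (cycle_classes (R :: 's::finite \<Rightarrow> 's \<Rightarrow> bool))"
  unfolding cycle_classes_def using finite_dcycles by blast

lemma rep_cycle_classes: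
  assumes "c \<in> cycle_classes R"
  shows "rep c \<in> dcycles R" "c = {rotate m (rep c) | m. True}"
proof -
  obtain ys where ys: "ys \<in> dcycles R" "c = {rotate m ys | m. True}"
    using assms unfolding cycle_classes_def by auto
  have "ys \<in> c" using ys(2) by (metis (mono_tags, lifting) mem_Collect_eq rotate0 id_apply)
  then have "rep c \<in> c" unfolding rep_def by (rule someI)
  then obtain a where a: "rep c = rotate a ys" using ys(2) by auto
  then show "rep c \<in> dcycles R" using dcycles_rotate[OF ys(1)] by simp
  show "c = {rotate m (rep c) | m. True}" using ys(2) a rotations_rotate by metis
qed

lemma sum_cycle_classes_mono_neutral:
  fixes R R' :: "'s::finite \<Rightarrow> 's \<Rightarrow> bool"
  assumes sub: "dcycles R \<subseteq> dcycles R'"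
    and zero: "\<And>ys. ys \<in> dcycles R' \<Longrightarrow> ys \<notin> dcycles R \<Longrightarrow> f ys = 0"
  shows "(\<Sum>c\<in>{c\<in>cycle_classes R. P (rep c)}. f (rep c))
       = (\<Sum>c\<in>{c\<in>cycle_classes R'. P (rep c)}. f (rep c))"
proof (rule sum.mono_neutral_left)
  show "finite {c\<in>cycle_classes R'. P (rep c)}"
    by (rule finite_subset[OF _ finite_cycle_classes[of R']]) auto
  show "{c\<in>cycle_classes R. P (rep c)} \<subseteq> {c\<in>cycle_classes R'. P (rep c)}"
    using sub unfolding cycle_classes_def by auto
  show "\<forall>c\<in>{c\<in>cycle_classes R'. P (rep c)} - {c\<in>cycle_classes R. P (rep c)}. f (rep c) = 0"
  proof
    fix c assume c: "c \<in> {c\<in>cycle_classes R'. P (rep c)} - {c\<in>cycle_classes R. P (rep c)}"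
    then have "rep c \<in> dcycles R'" using rep_cycle_classes(1) by blast
    moreover have "rep c \<notin> dcycles R"
    proof
      assume "rep c \<in> dcycles R"
      then have "{rotate m (rep c) | m. True} \<in> cycle_classes R"
        unfolding cycle_classes_def by blast
      then show False using c rep_cycle_classes(2)[of c R'] by auto
    qed
    ultimately show "f (rep c) = 0" by (rule zero)
  qed
qed

lemma cycle_flux_eq_0_if_not_cycle:
  fixes Q :: "'s::finite \<Rightarrow> 's \<Rightarrow> real"
  assumes ys: "ys \<in> dcycles R" "ys \<notin> dcycles (\<lambda>y y'. Q y y' > 0)"
    and nonneg: "\<And>y y'. y \<noteq> y' \<Longrightarrow> Q y y' \<ge> 0"
  shows "cycle_flux Q ys = 0"
proof -
  obtain h where h: "h < length ys" and "\<not> Q (ys ! h) (ys ! ((h + 1) mod length ys)) > 0"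
    using ys unfolding dcycles_def by auto
  then have "Q (ys ! h) (ys ! ((h + 1) mod length ys)) = 0"
    using nonneg[OF dcycles_step_neq[OF ys(1) h]] by simp
  then have "(\<Prod>h<length ys. Q (ys ! h) (ys ! ((h + 1) mod length ys))) = 0"
    using h by (intro prod_zero) auto
  then show ?thesis unfolding cycle_flux_def by simp
qed

lemma prod_group_by_label:
  fixes lab :: "nat \<Rightarrow> nat \<times> bool" and g :: "nat \<times> bool \<Rightarrow> real"
  assumes "\<And>h. h < L \<Longrightarrow> fst (lab h) \<in> {1..M}"
  shows "(\<Prod>h<L. g (lab h)) = (\<Prod>l\<in>{1..M}. g (l, True) ^ card {h. h < L \<and> lab h = (l, True)}
                                   * g (l, False) ^ card {h. h < L \<and> lab h = (l, False)})"
proof -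
  have "\<forall>h<L. lab h \<in> {1..M} \<times> UNIV" using assms by (simp add: mem_Times_iff)
  then have "lab ` {..<L} \<subseteq> {1..M} \<times> UNIV" by auto
  then have "(\<Prod>h<L. g (lab h)) = (\<Prod>p\<in>{1..M} \<times> UNIV. \<Prod>h\<in>{x. x \<in> {..<L} \<and> lab x = p}. g (lab h))"
    by (intro prod.group[symmetric]) auto
  also have "\<dots> = (\<Prod>p\<in>{1..M} \<times> UNIV. g p ^ card {h. h < L \<and> lab h = p})"
  proof (intro prod.cong refl)
    fix p
    have "(\<Prod>h\<in>{x. x \<in> {..<L} \<and> lab x = p}. g (lab h)) = (\<Prod>h\<in>{x. x \<in> {..<L} \<and> lab x = p}. g p)"
      by (rule prod.cong) auto
    then show "(\<Prod>h\<in>{x. x \<in> {..<L} \<and> lab x = p}. g (lab h)) = g p ^ card {h. h < L \<and> lab h = p}"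
      by simp
  qed
  also have "\<dots> = (\<Prod>l\<in>{1..M}. \<Prod>s\<in>UNIV. g (l, s) ^ card {h. h < L \<and> lab h = (l, s)})"
    by (simp add: prod.cartesian_product)
  finally show ?thesis by (simp add: UNIV_bool mult.commute)
qed

lemma sum_unique_label:
  fixes s0 :: bool
  assumes "finite A" "l0 \<in> A" "\<And>l s. l \<in> A \<Longrightarrow> E l s \<longleftrightarrow> (l = l0 \<and> s = s0)"
  shows "(\<Sum>l\<in>A. \<Sum>s\<in>UNIV. if E l s then f s l else (0::real)) = f s0 l0"
proof -
  have "(\<Sum>s\<in>UNIV. if E l s then f s l else 0) = (if l = l0 then f s0 l0 else 0)" if "l \<in> A" for l
  proof -
    have eq: "(\<Sum>s\<in>UNIV. if E l s then f s l else 0) = (\<Sum>s\<in>UNIV. if s = s0 \<and> l = l0 then f s l else 0)"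
      using assms(3)[OF that] by (intro sum.cong) auto
    show ?thesis unfolding eq by (cases s0) (auto simp: UNIV_bool)
  qed
  then have "(\<Sum>l\<in>A. \<Sum>s\<in>UNIV. if E l s then f s l else (0::real)) = (\<Sum>l\<in>A. if l = l0 then f s0 l0 else 0)"
    by (rule sum.cong[OF refl])
  also have "\<dots> = f s0 l0" using assms(1,2) by simp
  finally show ?thesis .
qed

definition unique_labels :: "nat \<Rightarrow> ('s \<Rightarrow> 's \<Rightarrow> nat \<Rightarrow> bool \<Rightarrow> bool) \<Rightarrow> bool" where
  "unique_labels M E \<longleftrightarrow>
     (\<forall>y y' l s l' s'. l \<in> {1..M} \<longrightarrow> l' \<in> {1..M} \<longrightarrow> E y y' l s \<longrightarrow> E y y' l' s' \<longrightarrow> l = l' \<and> s = s')"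

lemma edge_label_eq:
  assumes "unique_labels M E" "l \<in> {1..M}" "E y y' l s"
  shows "edge_label M E y y' = (l, s)"
  unfolding edge_label_def
proof (rule the_equality)
  fix p assume p: "fst p \<in> {1..M} \<and> E y y' (fst p) (snd p)"
  obtain a b where ab: "p = (a, b)" by fastforce
  have "a = l \<and> b = s"
    using p assms unfolding ab fst_conv snd_conv unique_labels_def by blast
  then show "p = (l, s)" using ab by simp
qed (use assms in simp)

lemma genHat_edge:
  assumes "unique_labels M E" "y \<noteq> y'" "l \<in> {1..M}" "E y y' l s"
  shows "genHat N1 N2 M XiX XiY k NA E \<alpha> \<beta> y y' = macro_rate N1 N2 XiX XiY k NA s l \<alpha> (\<beta> y)"
proof -
  have "E y y' l' s' \<longleftrightarrow> l' = l \<and> s' = s" if "l' \<in> {1..M}" for l' s'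
    using assms(1,3,4) that unfolding unique_labels_def by blast
  then show ?thesis
    unfolding genHat_def gen_of_def using assms(2,3) by (simp add: sum_unique_label)
qed

lemma prod_power_mult: "(\<Prod>i\<in>A. (a i :: real) ^ x i) ^ c = (\<Prod>i\<in>A. a i ^ (c * x i))"
  unfolding prod_power_distrib by (intro prod.cong refl) (metis power_mult mult.commute)

lemma edge_label_along_cycle:
  assumes uniq: "unique_labels M E"
    and ys: "ys \<in> dcycles (\<lambda>y y'. \<exists>l\<in>{1..M}. \<exists>s. E y y' l s)" and h: "h < length ys"
  defines "lab \<equiv> edge_label M E (ys ! h) (ys ! ((h + 1) mod length ys))"
  shows "fst lab \<in> {1..M}" "E (ys ! h) (ys ! ((h + 1) mod length ys)) (fst lab) (snd lab)"
proof -
  obtain l s where "l \<in> {1..M}" "E (ys ! h) (ys ! ((h + 1) mod length ys)) l s"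
    using ys h unfolding dcycles_def by blast
  then show "fst lab \<in> {1..M}" "E (ys ! h) (ys ! ((h + 1) mod length ys)) (fst lab) (snd lab)"
    using edge_label_eq[OF uniq] unfolding lab_def by simp_all
qed

lemma step_count_eq_card_edge_label:
  assumes uniq: "unique_labels M E"
    and ys: "ys \<in> dcycles (\<lambda>y y'. \<exists>l\<in>{1..M}. \<exists>s. E y y' l s)" and l: "l \<in> {1..M}"
  shows "step_count E ys l s
       = card {h. h < length ys \<and> edge_label M E (ys ! h) (ys ! ((h + 1) mod length ys)) = (l, s)}"
proof -
  have "E (ys ! h) (ys ! ((h + 1) mod length ys)) l s
      \<longleftrightarrow> edge_label M E (ys ! h) (ys ! ((h + 1) mod length ys)) = (l, s)" if "h < length ys" for h
    using edge_label_along_cycle(2)[OF uniq ys that] edge_label_eq[OF uniq l] by auto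
  then show ?thesis unfolding step_count_def by (intro arg_cong[where f = card]) auto
qed

lemma cycle_flux_genHat_eq_cycle_term:
  assumes uniq: "unique_labels M E"
    and ys: "ys \<in> dcycles (\<lambda>y y'. \<exists>l\<in>{1..M}. \<exists>s. E y y' l s)"
  shows "cycle_flux (genHat N1 N2 M XiX XiY k NA E \<alpha> \<beta>) ys = cycle_term N1 N2 M XiX XiY k NA E \<alpha> \<beta> ys"
proof -
  define L where "L = length ys"
  define nxt where "nxt h = ys ! ((h + 1) mod L)" for h
  define lab where "lab h = edge_label M E (ys ! h) (nxt h)" for h
  have labE: "fst (lab h) \<in> {1..M}" "E (ys ! h) (nxt h) (fst (lab h)) (snd (lab h))" if "h < L" for h
    using edge_label_along_cycle[OF uniq ys that[unfolded L_def]] unfolding lab_def nxt_def L_def .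
  have cnt: "step_count E ys l s = card {h. h < L \<and> lab h = (l, s)}" if "l \<in> {1..M}" for l s
    using step_count_eq_card_edge_label[OF uniq ys that] unfolding lab_def nxt_def L_def .
  define g where "g p = k (snd p) (fst p) * (\<Prod>i<N1. \<alpha> i ^ XiX (snd p) (fst p) i)" for p
  define B where "B h = (\<Prod>j<N2. \<beta> (ys ! h) j ^ XiY (snd (lab h)) (fst (lab h)) j)" for h
  have "genHat N1 N2 M XiX XiY k NA E \<alpha> \<beta> (ys ! h) (nxt h) = NA * g (lab h) * B h" if h: "h < L" for h
    using genHat_edge[OF uniq _ labE[OF h]] dcycles_step_neq[OF ys] h
    unfolding macro_rate_def g_def B_def nxt_def L_def by (simp add: mult_ac)
  then have "(\<Prod>h<L. genHat N1 N2 M XiX XiY k NA E \<alpha> \<beta> (ys ! h) (nxt h))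
      = NA ^ L * (\<Prod>h<L. g (lab h)) * (\<Prod>h<L. B h)"
    by (simp add: prod.distrib)
  also have "(\<Prod>h<L. g (lab h)) = (\<Prod>l\<in>{1..M}. g (l, True) ^ card {h. h < L \<and> lab h = (l, True)}
                                   * g (l, False) ^ card {h. h < L \<and> lab h = (l, False)})"
    by (rule prod_group_by_label) (use labE in auto)
  also have "\<dots> = (\<Prod>l\<in>{1..M}. k True l ^ step_count E ys l True * k False l ^ step_count E ys l False
           * (\<Prod>i<N1. \<alpha> i ^ (step_count E ys l True * XiX True l i
                               + step_count E ys l False * XiX False l i)))"
    by (intro prod.cong refl)
       (simp add: cnt g_def power_mult_distrib prod_power_mult power_add prod.distrib mult_ac)
  finally show ?thesis
    unfolding cycle_flux_def cycle_term_def Let_def L_def[symmetric] nxt_def[symmetric] B_def lab_def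
    by (simp add: mult_ac)
qed

locale volume_limit =
  fixes N1 N2 M :: nat
    and XiX XiY :: "bool \<Rightarrow> nat \<Rightarrow> nat \<Rightarrow> nat"
    and k :: "bool \<Rightarrow> nat \<Rightarrow> real"
    and NA :: real
    and n :: "real \<Rightarrow> 's::finite \<Rightarrow> nat \<Rightarrow> nat"
    and nx :: "real \<Rightarrow> nat \<Rightarrow> nat"
    and E :: "'s \<Rightarrow> 's \<Rightarrow> nat \<Rightarrow> bool \<Rightarrow> bool"
    and \<alpha> :: "nat \<Rightarrow> real"
    and \<beta> :: "'s \<Rightarrow> nat \<Rightarrow> real"
  assumes NA_pos: "NA > 0"
    and k_pos: "\<And>s l. l \<in> {1..M} \<Longrightarrow> k s l > 0"
    and stoich_distinct: "\<And>s l s' l'. l \<in> {1..M} \<Longrightarrow> l' \<in> {1..M} \<Longrightarrow> (l, s) \<noteq> (l', s')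
                            \<Longrightarrow> \<exists>j<N2. stoichY XiY s l j \<noteq> stoichY XiY s' l' j"
    and edges_fixed: "\<And>V y y' l s. V > 0 \<Longrightarrow> l \<in> {1..M} \<Longrightarrow>
          E y y' l s \<longleftrightarrow> (\<forall>j<N2. int (n V y' j) - int (n V y j) = stoichY XiY s l j)"
    and lim_beta: "\<And>y j. j < N2 \<Longrightarrow> ((\<lambda>V. real (n V y j) / (V * NA)) \<longlongrightarrow> \<beta> y j) at_top"
    and lim_alpha: "\<And>i. i < N1 \<Longrightarrow> ((\<lambda>V. real (nx V i) / (V * NA)) \<longlongrightarrow> \<alpha> i) at_top"
    and nondeg: "(\<Sum>j\<in>UNIV. det_sub (genHat N1 N2 M XiX XiY k NA E \<alpha> \<beta>) (UNIV - {j})) \<noteq> 0"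
begin

abbreviation "Q V \<equiv> genV N1 N2 M XiX XiY k NA n nx V"

abbreviation "Qhat \<equiv> genHat N1 N2 M XiX XiY k NA E \<alpha> \<beta>"

abbreviation "reaction_edge y y' \<equiv> \<exists>l\<in>{1..M}. \<exists>s. E y y' l s"

definition scaled_rate :: "real \<Rightarrow> 's \<Rightarrow> 's \<Rightarrow> real" where
  "scaled_rate V y y' = (\<Sum>l\<in>{1..M}. \<Sum>s\<in>UNIV.
     if E y y' l s then propensity N1 N2 XiX XiY k NA s l (nx V) (n V y) V / V else 0)"

lemma labV_eq_E: "V > 0 \<Longrightarrow> l \<in> {1..M} \<Longrightarrow> labV N2 XiY n V y y' l s = E y y' l s"
  using edges_fixed unfolding labV_def by simp

lemma labels_unique: "unique_labels M E"
  unfolding unique_labels_def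
proof (intro allI impI)
  fix y y' l s l' s'
  assume l: "l \<in> {1..M}" "l' \<in> {1..M}" and e: "E y y' l s" "E y y' l' s'"
  show "l = l' \<and> s = s'"
  proof (rule ccontr)
    assume "\<not> (l = l' \<and> s = s')"
    then obtain j where "j < N2" "stoichY XiY s l j \<noteq> stoichY XiY s' l' j"
      using stoich_distinct[OF l] by auto
    then show False using e edges_fixed[of 1, OF _ l(1)] edges_fixed[of 1, OF _ l(2)] by simp
  qed
qed

lemma genV_eq_scaled: "V > 0 \<Longrightarrow> Q V = (\<lambda>i j. V * gen_of (scaled_rate V) i j)"
  unfolding genV_def scaled_rate_def gen_of_scale[symmetric] sum_distrib_left
  by (intro arg_cong[where f = gen_of] ext sum.cong refl) (simp add: labV_eq_E)

lemma scaled_rate_nonneg: "V > 0 \<Longrightarrow> scaled_rate V y y' \<ge> 0"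
  unfolding scaled_rate_def using k_pos NA_pos
  by (intro sum_nonneg) (auto intro: divide_nonneg_pos propensity_nonneg)

lemma genV_offdiag: "V > 0 \<Longrightarrow> y \<noteq> y' \<Longrightarrow> Q V y y' = V * scaled_rate V y y'"
  using genV_eq_scaled by (simp add: gen_of_def)

lemma dcycles_genV_subset:
  assumes V: "V > 0"
  shows "dcycles (\<lambda>y y'. Q V y y' > 0) \<subseteq> dcycles reaction_edge"
proof
  fix ys assume ys: "ys \<in> dcycles (\<lambda>y y'. Q V y y' > 0)"
  show "ys \<in> dcycles reaction_edge"
  proof (rule dcycles_mono[OF ys])
    fix y y' assume "y \<noteq> y'" "Q V y y' > 0"
    then have nonzero: "scaled_rate V y y' \<noteq> 0" using V by (auto simp: genV_offdiag)
    show "reaction_edge y y'"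
    proof (rule ccontr)
      assume "\<not> reaction_edge y y'"
      then have "scaled_rate V y y' = 0" unfolding scaled_rate_def by (intro sum.neutral ballI) simp
      then show False using nonzero by simp
    qed
  qed
qed

lemma scaled_generator_tendsto: "((\<lambda>V. gen_of (scaled_rate V) i j) \<longlongrightarrow> Qhat i j) at_top"
  unfolding genHat_def scaled_rate_def
proof (intro gen_of_tendsto tendsto_sum)
  fix y y' l s
  show "((\<lambda>V. if E y y' l s then propensity N1 N2 XiX XiY k NA s l (nx V) (n V y) V / V else 0)
      \<longlongrightarrow> (if E y y' l s then macro_rate N1 N2 XiX XiY k NA s l \<alpha> (\<beta> y) else 0)) at_top"
    by (cases "E y y' l s") (simp_all add: propensity_div_volume_tendsto NA_pos lim_alpha lim_beta)
qed

lemma cycle_flux_genV_tendsto: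
  assumes ys: "ys \<in> dcycles reaction_edge"
  shows "((\<lambda>V. cycle_flux (Q V) ys / V) \<longlongrightarrow> cycle_term N1 N2 M XiX XiY k NA E \<alpha> \<beta> ys) at_top"
proof -
  have "((\<lambda>V. cycle_flux (gen_of (scaled_rate V)) ys) \<longlongrightarrow> cycle_flux Qhat ys) at_top"
    by (rule cycle_flux_tendsto[OF scaled_generator_tendsto nondeg])
  moreover have "cycle_flux Qhat ys = cycle_term N1 N2 M XiX XiY k NA E \<alpha> \<beta> ys"
    by (rule cycle_flux_genHat_eq_cycle_term[OF labels_unique ys])
  moreover have "\<forall>\<^sub>F V in at_top. cycle_flux (gen_of (scaled_rate V)) ys = cycle_flux (Q V) ys / V"
    using eventually_gt_at_top[of 0]
  proof eventually_elim
    case (elim V)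
    have "distinct ys" using ys unfolding dcycles_def by simp
    then show ?case
      unfolding genV_eq_scaled[OF elim] using elim by (simp add: cycle_flux_scale)
  qed
  ultimately show ?thesis by (simp add: Lim_transform_eventually)
qed

lemma rc_flux_genV_eq:
  assumes V: "V > 0"
  shows "rc_flux M (Q V) (labV N2 XiY n V) ct
       = (\<Sum>c\<in>{c\<in>cycle_classes reaction_edge. \<forall>l\<in>{1..M}. phi E (rep c) l = ct l}. cycle_flux (Q V) (rep c))"
    (is "_ = ?rhs")
proof -
  have "phi (labV N2 XiY n V) ys l = phi E ys l" if "l \<in> {1..M}" for ys l
    unfolding phi_def step_count_def using labV_eq_E[OF V that] by simp
  then have "rc_flux M (Q V) (labV N2 XiY n V) ct
      = (\<Sum>c\<in>{c\<in>cycle_classes (\<lambda>y y'. Q V y y' > 0). \<forall>l\<in>{1..M}. phi E (rep c) l = ct l}.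
           cycle_flux (Q V) (rep c))"
    unfolding rc_flux_def by (intro sum.cong) auto
  also have "\<dots> = ?rhs"
  proof (rule sum_cycle_classes_mono_neutral[OF dcycles_genV_subset[OF V]])
    fix ys assume "ys \<in> dcycles reaction_edge" "ys \<notin> dcycles (\<lambda>y y'. Q V y y' > 0)"
    then show "cycle_flux (Q V) ys = 0"
      by (rule cycle_flux_eq_0_if_not_cycle)
        (use V in \<open>simp add: genV_offdiag scaled_rate_nonneg\<close>)
  qed
  finally show ?thesis .
qed

lemma rc_flux_genV_tendsto:
  "((\<lambda>V. rc_flux M (Q V) (labV N2 XiY n V) ct / V) \<longlongrightarrow>
      (\<Sum>c\<in>{c\<in>cycle_classes reaction_edge. \<forall>l\<in>{1..M}. phi E (rep c) l = ct l}.
          cycle_term N1 N2 M XiX XiY k NA E \<alpha> \<beta> (rep c))) at_top"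
proof -
  let ?C = "{c\<in>cycle_classes reaction_edge. \<forall>l\<in>{1..M}. phi E (rep c) l = ct l}"
  have "((\<lambda>V. \<Sum>c\<in>?C. cycle_flux (Q V) (rep c) / V) \<longlongrightarrow>
      (\<Sum>c\<in>?C. cycle_term N1 N2 M XiX XiY k NA E \<alpha> \<beta> (rep c))) at_top"
    by (intro tendsto_sum cycle_flux_genV_tendsto) (auto intro: rep_cycle_classes(1))
  moreover have "\<forall>\<^sub>F V in at_top. (\<Sum>c\<in>?C. cycle_flux (Q V) (rep c) / V) =
      rc_flux M (Q V) (labV N2 XiY n V) ct / V"
    using eventually_gt_at_top[of 0]
    by eventually_elim (simp add: rc_flux_genV_eq sum_divide_distrib)
  ultimately show ?thesis by (rule Lim_transform_eventually)
qed

end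

theorem mainTheorem3:
  fixes N1 N2 M :: nat
    and XiX XiY :: "bool \<Rightarrow> nat \<Rightarrow> nat \<Rightarrow> nat"
    and k :: "bool \<Rightarrow> nat \<Rightarrow> real"
    and NA :: real
    and n :: "real \<Rightarrow> 's::finite \<Rightarrow> nat \<Rightarrow> nat"
    and nx :: "real \<Rightarrow> nat \<Rightarrow> nat"
    and E :: "'s \<Rightarrow> 's \<Rightarrow> nat \<Rightarrow> bool \<Rightarrow> bool"
    and \<alpha> :: "nat \<Rightarrow> real"
    and \<beta> :: "'s \<Rightarrow> nat \<Rightarrow> real"
  assumes NA_pos: "NA > 0"
    and k_pos: "\<And>s l. l \<in> {1..M} \<Longrightarrow> k s l > 0"
    and XiX_conv_fw: "\<And>l i. l \<noteq> 1 \<Longrightarrow> XiX True l i = 0"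
    and XiX_conv_bw: "\<And>l i. l \<noteq> M \<Longrightarrow> XiX False l i = 0"
    and stoich_nonzero: "\<And>s l. l \<in> {1..M} \<Longrightarrow> \<exists>j<N2. stoichY XiY s l j \<noteq> 0"
    and stoich_distinct: "\<And>s l s' l'. l \<in> {1..M} \<Longrightarrow> l' \<in> {1..M} \<Longrightarrow> (l, s) \<noteq> (l', s')
                            \<Longrightarrow> \<exists>j<N2. stoichY XiY s l j \<noteq> stoichY XiY s' l' j"
    and n_inj: "\<And>V y y'. V > 0 \<Longrightarrow> (\<forall>j<N2. n V y j = n V y' j) \<Longrightarrow> y = y'"
    and edges_fixed: "\<And>V y y' l s. V > 0 \<Longrightarrow> l \<in> {1..M} \<Longrightarrow>
          E y y' l s \<longleftrightarrow> (\<forall>j<N2. int (n V y' j) - int (n V y j) = stoichY XiY s l j)"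
    and lim_beta: "\<And>y j. j < N2 \<Longrightarrow> ((\<lambda>V. real (n V y j) / (V * NA)) \<longlongrightarrow> \<beta> y j) at_top"
    and lim_alpha: "\<And>i. i < N1 \<Longrightarrow> ((\<lambda>V. real (nx V i) / (V * NA)) \<longlongrightarrow> \<alpha> i) at_top"
    and irred: "\<And>V. V > 0 \<Longrightarrow> irreducible_gen (genV N1 N2 M XiX XiY k NA n nx V)"
    and nondeg: "(\<Sum>j\<in>UNIV. det_sub (genHat N1 N2 M XiX XiY k NA E \<alpha> \<beta>) (UNIV - {j})) \<noteq> 0"
  shows "(\<forall>ct :: nat \<Rightarrow> int.
            ((\<lambda>V. rc_flux M (genV N1 N2 M XiX XiY k NA n nx V) (labV N2 XiY n V) ct / V) \<longlongrightarrow>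
               (\<Sum>c\<in>{c\<in>cycle_classes (\<lambda>y y'. \<exists>l\<in>{1..M}. \<exists>s. E y y' l s).
                        \<forall>l\<in>{1..M}. phi E (rep c) l = ct l}. cycle_term N1 N2 M XiX XiY k NA E \<alpha> \<beta> (rep c))) at_top)
       \<and> (\<forall>ys\<in>dcycles (\<lambda>y y'. \<exists>l\<in>{1..M}. \<exists>s. E y y' l s).
            ((\<lambda>V. cycle_flux (genV N1 N2 M XiX XiY k NA n nx V) ys / V) \<longlongrightarrow> cycle_term N1 N2 M XiX XiY k NA E \<alpha> \<beta> ys) at_top)"
  \<comment> \<open>the conventions on \<open>XiX\<close>, nonvanishing stoichiometry, injectivity of \<open>n\<close> and
     irreducibility of \<open>Q\<^sup>V\<close> are not needed for the limit\<close>
proof -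
  interpret volume_limit N1 N2 M XiX XiY k NA n nx E \<alpha> \<beta>
    by unfold_locales (fact NA_pos k_pos stoich_distinct edges_fixed lim_beta lim_alpha nondeg)+
  show ?thesis using rc_flux_genV_tendsto cycle_flux_genV_tendsto by blast
qed

end
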